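(* Let $q\ge 2$ and let $f$ be a $q$-regular sequence with a zero-insensitive linear representation $(\mathbf{u},(M_i)_{0\le i<q},\mathbf{v})$, so that $f(n)=\mathbf{u}^t M_{n_0}M_{n_1}\cdots M_{n_L}\mathbf{v}$ where $n_L\cdots n_0$ is the $q$-ary expansion of $n$. Let $U$ be the smallest vector space such that every vector of the form $\mathbf{u}^t\prod_{i\in I}M_{n_i}$ (for a finite index set $I$ and digits $n_i\in\{0,\dots,q-1\}$) lies in the affine subspace $\mathbf{u}^t+U^t$, where $U^t=\{\mathbf{x}^t:\mathbf{x}\in U\}$; let $V$ be the smallest vector space such that every vector of the form $\prod_{j\in J}M_{n_j}\mathbf{v}$ lies in $\mathbf{v}+V$. Let $r$ be a nonnegative integer. Then $f$ is $q$-quasiadditive with parameter $r$ (i.e. $f(q^{k+r}a+b)=f(a)+f(b)$ for all nonnegative integers $a,b,k$ with $0\le b<q^k$) if and only if all of the following hold: (1) $\mathbf{u}^t\mathbf{v}=0$; (2) $\mathbf{x}^t(M_0^r-I)\mathbf{v}=0$ for all $\mathbf{x}\in U$; (3) $\mathbf{u}^t(M_0^r-I)\mathbf{y}=0$ for all $\mathbf{y}\in V$; (4) $\mathbf{x}^tM_0^r\mathbf{y}=0$ for all $\mathbf{x}\in U$ and $\mathbf{y}\in V$.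
   Context: A function $f$ on the nonnegative integers is $q$-regular if $f(n)=\mathbf{u}^t\mathbf{f}(n)$ for a vector $\mathbf{u}$ and a vector-valued function $\mathbf{f}$ for which there are square matrices $M_0,\dots,M_{q-1}$ with $\mathbf{f}(qn+i)=M_i\mathbf{f}(n)$ for all $0\le i<q$ and $qn+i>0$; set $\mathbf{v}=\mathbf{f}(0)$. Equivalently $f(n)=\mathbf{u}^t M_{n_0}M_{n_1}\cdots M_{n_L}\mathbf{v}$ for the $q$-ary expansion $n_L\cdots n_0$ of $n$. The triple $(\mathbf{u},(M_i)_{0\le i<q},\mathbf{v})$ is a linear representation of $f$; it is zero-insensitive if $M_0\mathbf{v}=\mathbf{v}$. $I$ denotes the identity matrix. *)

theory Defs
  imports "HOL-Analysis.Analysis"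
begin

definition dotp :: "'a::field ^ 'n \<Rightarrow> 'a ^ 'n \<Rightarrow> 'a" where
  "dotp x y = (\<Sum>i\<in>UNIV. x $ i * y $ i)"

definition matpow :: "'a::field ^ 'n ^ 'n \<Rightarrow> nat \<Rightarrow> 'a ^ 'n ^ 'n" where
  "matpow A r = (((**) A) ^^ r) (mat 1)"

definition word_prod :: "(nat \<Rightarrow> 'a::field ^ 'n ^ 'n) \<Rightarrow> nat list \<Rightarrow> 'a ^ 'n ^ 'n" where
  "word_prod M ws = foldr (\<lambda>i P. M i ** P) ws (mat 1)"

fun digits :: "nat \<Rightarrow> nat \<Rightarrow> nat list" where
  "digits q n = (if n = 0 \<or> q < 2 then [] else n mod q # digits q (n div q))"

definition digit_products :: "nat \<Rightarrow> (nat \<Rightarrow> 'a::field ^ 'n ^ 'n) \<Rightarrow> ('a ^ 'n ^ 'n) set" where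
  "digit_products q M = {word_prod M ws | ws. set ws \<subseteq> {..<q}}"

definition space_U :: "nat \<Rightarrow> 'a::field ^ 'n \<Rightarrow> (nat \<Rightarrow> 'a ^ 'n ^ 'n) \<Rightarrow> ('a ^ 'n) set" where
  "space_U q u M = \<Inter>{W. vec.subspace W \<and> (\<forall>P\<in>digit_products q M. u v* P \<in> (\<lambda>w. u + w) ` W)}"

definition space_V :: "nat \<Rightarrow> (nat \<Rightarrow> 'a::field ^ 'n ^ 'n) \<Rightarrow> 'a ^ 'n \<Rightarrow> ('a ^ 'n) set" where
  "space_V q M v = \<Inter>{W. vec.subspace W \<and> (\<forall>P\<in>digit_products q M. P *v v \<in> (\<lambda>w. v + w) ` W)}"

definition quasiadditive :: "nat \<Rightarrow> nat \<Rightarrow> (nat \<Rightarrow> 'a::field) \<Rightarrow> bool" where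
  "quasiadditive q r f \<longleftrightarrow> (\<forall>a b k. b < q ^ k \<longrightarrow> f (q ^ (k + r) * a + b) = f a + f b)"

end

theory Submission
  imports Defs
begin

text \<open>
  Every argument of f can be written as q^(k+r) a + b with b < q^k, i.e. as the digit word of b
  padded with r zeros, followed by the digits of a; zero-insensitivity makes the padding harmless.
  Hence quasiadditivity says u^t P A Q v = u^t Q v + u^t P v for all digit products P, Q, where
  A = M_0^r. Substituting u^t P = u^t + x^t and Q v = v + y turns this into
  u^t (A - I) y + x^t A y = u^t v for x, y ranging over generating sets of U and V that contain 0.
  Taking x = 0 and y = 0 isolates the constant and the linear part, and what remains is bilinear,
  so it extends from the generating sets to their spans.
\<close>

declare digits.simps [simp del]

lemma digits_0 [simp]: "digits q 0 = []"
  by (simp add: digits.simps)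

lemma digits_add_mult:
  assumes "q \<ge> 2" "d < q" "d + q * m \<noteq> 0"
  shows "digits q (d + q * m) = d # digits q m"
  using assms by (subst digits.simps) simp

lemma set_digits_subset: "q \<ge> 2 \<Longrightarrow> set (digits q n) \<subseteq> {..<q}"
  by (induction q n rule: digits.induct) (subst digits.simps, auto)

fun of_digits :: "nat \<Rightarrow> nat list \<Rightarrow> nat" where
  "of_digits q [] = 0"
| "of_digits q (d # ds) = d + q * of_digits q ds"

lemma of_digits_append: "of_digits q (xs @ ys) = of_digits q xs + q ^ length xs * of_digits q ys"
  by (induction xs) (auto simp: algebra_simps)

lemma of_digits_replicate_0 [simp]: "of_digits q (replicate r 0) = 0"
  by (induction r) auto

lemma of_digits_less: "set ds \<subseteq> {..<q} \<Longrightarrow> of_digits q ds < q ^ length ds"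
proof (induction ds)
  case (Cons d ds)
  then have "of_digits q ds + 1 \<le> q ^ length ds" "d < q" by auto
  then have "d + q * of_digits q ds < q * (of_digits q ds + 1)" by simp
  also have "\<dots> \<le> q * q ^ length ds"
    using \<open>of_digits q ds + 1 \<le> q ^ length ds\<close> by (rule mult_le_mono2)
  finally show ?case by simp
qed simp

lemma ex_of_digits:
  assumes "q \<ge> 2" "b < q ^ k"
  obtains ds where "set ds \<subseteq> {..<q}" "length ds = k" "of_digits q ds = b"
  using assms(2)
proof (induction k arbitrary: b thesis)
  case (Suc k)
  have "b div q < q ^ k"
    using Suc.prems(2) assms(1) by (simp add: less_mult_imp_div_less mult.commute)
  then obtain ds where "set ds \<subseteq> {..<q}" "length ds = k" "of_digits q ds = b div q"
    using Suc.IH by blast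
  then show ?case
    using Suc.prems(1)[of "b mod q # ds"] assms(1) by simp
qed simp

lemma word_prod_Nil [simp]: "word_prod M [] = mat 1"
  by (simp add: word_prod_def)

lemma word_prod_Cons [simp]: "word_prod M (i # ws) = M i ** word_prod M ws"
  by (simp add: word_prod_def)

lemma word_prod_append: "word_prod M (xs @ ys) = word_prod M xs ** word_prod M ys"
  by (induction xs) (auto simp: matrix_mul_assoc)

lemma word_prod_replicate_0: "word_prod M (replicate r 0) = matpow (M 0) r"
  by (induction r) (auto simp: matpow_def)

lemma matpow_fixed_vector: "A *v v = v \<Longrightarrow> matpow A r *v v = v"
  by (induction r) (auto simp: matpow_def matrix_vector_mul_assoc[symmetric])

lemma word_prod_digits_of_digits:
  assumes q: "q \<ge> 2" and zero_ins: "M 0 *v v = v" and ds: "set ds \<subseteq> {..<q}"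
  shows "word_prod M (digits q (of_digits q ds + q ^ length ds * a)) *v v
       = word_prod M ds *v (word_prod M (digits q a) *v v)"
  using ds
proof (induction ds)
  case (Cons d ds)
  define m where "m = of_digits q ds + q ^ length ds * a"
  have d: "d < q" using Cons.prems by simp
  have "word_prod M (digits q (d + q * m)) *v v = M d *v (word_prod M (digits q m) *v v)"
  proof (cases "d + q * m = 0")
    case True
    with q have "d = 0" "m = 0" by auto
    with zero_ins show ?thesis by simp
  qed (simp add: digits_add_mult[OF q d] matrix_vector_mul_assoc)
  moreover have "of_digits q (d # ds) + q ^ length (d # ds) * a = d + q * m"
    by (simp add: m_def algebra_simps)
  ultimately show ?case
    using Cons by (simp only: m_def) (simp add: matrix_vector_mul_assoc matrix_mul_assoc)
qed simp

lemma word_prod_in_digit_products: "set ws \<subseteq> {..<q} \<Longrightarrow> word_prod M ws \<in> digit_products q M"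
  unfolding digit_products_def by blast

lemma quasiadditive_iff_digit_products:
  assumes q: "q \<ge> 2"
    and rep: "\<And>n. f n = dotp u (word_prod M (digits q n) *v v)"
    and zero_ins: "M 0 *v v = v"
  shows "quasiadditive q r f \<longleftrightarrow> (\<forall>P\<in>digit_products q M. \<forall>Q\<in>digit_products q M.
           dotp u ((P ** matpow (M 0) r) *v (Q *v v)) = dotp u (Q *v v) + dotp u (P *v v))"
    (is "_ \<longleftrightarrow> (\<forall>P\<in>_. \<forall>Q\<in>_. ?additive P Q)")
proof -
  note digits_concat = word_prod_digits_of_digits[where M = M and v = v, OF q zero_ins]
  have f_shift: "f (q ^ (length ds + r) * a + of_digits q ds)
      = dotp u ((word_prod M ds ** matpow (M 0) r) *v (word_prod M (digits q a) *v v))"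
    if ds: "set ds \<subseteq> {..<q}" for ds a
  proof -
    have padded: "set (ds @ replicate r 0) \<subseteq> {..<q}" using ds q by auto
    have "q ^ (length ds + r) * a + of_digits q ds
        = of_digits q (ds @ replicate r 0) + q ^ length (ds @ replicate r 0) * a"
      by (simp add: of_digits_append)
    then show ?thesis
      by (simp only: rep digits_concat[OF padded])
        (simp add: word_prod_append word_prod_replicate_0 matrix_vector_mul_assoc)
  qed
  have f_of_digits: "f (of_digits q ds) = dotp u (word_prod M ds *v v)"
    if "set ds \<subseteq> {..<q}" for ds
    using digits_concat[OF that, of 0] by (simp add: rep)
  show ?thesis
  proof
    assume qa: "quasiadditive q r f"
    show "\<forall>P\<in>digit_products q M. \<forall>Q\<in>digit_products q M. ?additive P Q"
    proof (clarsimp simp: digit_products_def)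
      fix ds es assume ds: "set ds \<subseteq> {..<q}" and es: "set es \<subseteq> {..<q}"
      have "f (q ^ (length ds + r) * of_digits q es + of_digits q ds)
          = f (of_digits q es) + f (of_digits q ds)"
        using qa of_digits_less[OF ds] unfolding quasiadditive_def by blast
      then show "?additive (word_prod M ds) (word_prod M es)"
        using f_shift[OF ds] f_of_digits[OF ds] f_of_digits[OF es]
        by (simp add: digits_concat[OF es, of 0, simplified])
    qed
  next
    assume additive: "\<forall>P\<in>digit_products q M. \<forall>Q\<in>digit_products q M. ?additive P Q"
    show "quasiadditive q r f"
      unfolding quasiadditive_def
    proof (intro allI impI)
      fix a b k :: nat assume "b < q ^ k"
      then obtain ds where ds: "set ds \<subseteq> {..<q}" "length ds = k" "of_digits q ds = b"
        using ex_of_digits[OF q] by blast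
      have "?additive (word_prod M ds) (word_prod M (digits q a))"
        using additive word_prod_in_digit_products[OF ds(1)]
          word_prod_in_digit_products[OF set_digits_subset[OF q]] by blast
      then show "f (q ^ (k + r) * a + b) = f a + f b"
        using f_shift[OF ds(1)] f_of_digits[OF ds(1)] ds by (simp add: rep)
    qed
  qed
qed

lemma dotp_commute: "dotp x y = dotp y x"
  unfolding dotp_def by (simp add: mult.commute)

lemma dotp_add_right: "dotp x (y + z) = dotp x y + dotp x z"
  unfolding dotp_def by (simp add: distrib_left sum.distrib)

lemma dotp_diff_left: "dotp (x - y) z = dotp x z - dotp y z"
  unfolding dotp_def by (simp add: left_diff_distrib sum_subtractf)

lemma dotp_diff_right: "dotp x (y - z) = dotp x y - dotp x z"
  unfolding dotp_def by (simp add: right_diff_distrib sum_subtractf)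

lemma dotp_scale_right: "dotp x (c *s y) = c * dotp x y"
  unfolding dotp_def by (simp add: sum_distrib_left mult.left_commute)

lemma dotp_0_left [simp]: "dotp 0 y = 0"
  unfolding dotp_def by simp

lemma dotp_0_right [simp]: "dotp x 0 = 0"
  unfolding dotp_def by simp

lemma dotp_matrix_vector_mult: "dotp x (A *v y) = dotp (x v* A) y"
proof -
  have "dotp x (A *v y) = (\<Sum>i\<in>UNIV. \<Sum>j\<in>UNIV. x $ i * (A $ i $ j * y $ j))"
    unfolding dotp_def matrix_vector_mult_def by (simp add: sum_distrib_left)
  also have "\<dots> = (\<Sum>j\<in>UNIV. \<Sum>i\<in>UNIV. x $ i * (A $ i $ j * y $ j))"
    by (rule sum.swap)
  also have "\<dots> = dotp (x v* A) y"
    unfolding dotp_def vector_matrix_mult_def by (simp add: sum_distrib_right mult.assoc)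
  finally show ?thesis .
qed

lemma subspace_dotp_eq_0: "vec.subspace {y. dotp x y = 0}"
  by (simp add: vec.subspace_def dotp_add_right dotp_scale_right)

lemma dotp_eq_0_on_span:
  assumes "\<forall>y\<in>Y. dotp x y = 0" and "y \<in> vec.span Y"
  shows "dotp x y = 0"
  using vec.span_induct[where P = "\<lambda>y. dotp x y = 0", OF assms(2) subspace_dotp_eq_0] assms(1)
  by simp

lemma dotp_matrix_eq_0_on_spans:
  assumes "\<forall>x\<in>X. \<forall>y\<in>Y. dotp x (A *v y) = 0" and "x \<in> vec.span X" and "y \<in> vec.span Y"
  shows "dotp x (A *v y) = 0"
proof -
  have "dotp x' (A *v y) = 0" if "x' \<in> X" for x'
    using assms(1) that dotp_eq_0_on_span[of Y "x' v* A" y] assms(3)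
    by (simp add: dotp_matrix_vector_mult)
  then show ?thesis
    using dotp_eq_0_on_span[of X "A *v y" x] assms(2) by (simp add: dotp_commute)
qed

lemma affine_bilinear_eq_iff_spans:
  assumes "0 \<in> X" and "0 \<in> Y"
  shows "(\<forall>x\<in>X. \<forall>y\<in>Y. dotp u (B *v y) + dotp x (A *v y) = c)
     \<longleftrightarrow> c = 0 \<and> (\<forall>y\<in>vec.span Y. dotp u (B *v y) = 0)
           \<and> (\<forall>x\<in>vec.span X. \<forall>y\<in>vec.span Y. dotp x (A *v y) = 0)"
proof
  assume eq: "\<forall>x\<in>X. \<forall>y\<in>Y. dotp u (B *v y) + dotp x (A *v y) = c"
  have "dotp u (B *v 0) + dotp 0 (A *v 0) = c"
    using eq assms by blast
  then have "c = 0" by simp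
  have linear: "\<forall>y\<in>Y. dotp (u v* B) y = 0"
  proof
    fix y assume "y \<in> Y"
    then have "dotp u (B *v y) + dotp 0 (A *v y) = c"
      using eq assms(1) by blast
    with \<open>c = 0\<close> show "dotp (u v* B) y = 0"
      by (simp add: dotp_matrix_vector_mult)
  qed
  have bilinear: "\<forall>x\<in>X. \<forall>y\<in>Y. dotp x (A *v y) = 0"
    using eq linear \<open>c = 0\<close> by (simp add: dotp_matrix_vector_mult[of u])
  show "c = 0 \<and> (\<forall>y\<in>vec.span Y. dotp u (B *v y) = 0)
      \<and> (\<forall>x\<in>vec.span X. \<forall>y\<in>vec.span Y. dotp x (A *v y) = 0)"
    using \<open>c = 0\<close> dotp_eq_0_on_span[OF linear] dotp_matrix_eq_0_on_spans[OF bilinear]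
    by (simp add: dotp_matrix_vector_mult[of u])
next
  assume vanish: "c = 0 \<and> (\<forall>y\<in>vec.span Y. dotp u (B *v y) = 0)
      \<and> (\<forall>x\<in>vec.span X. \<forall>y\<in>vec.span Y. dotp x (A *v y) = 0)"
  show "\<forall>x\<in>X. \<forall>y\<in>Y. dotp u (B *v y) + dotp x (A *v y) = c"
  proof (intro ballI)
    fix x y assume "x \<in> X" "y \<in> Y"
    then have "x \<in> vec.span X" "y \<in> vec.span Y"
      by (simp_all add: vec.span_base)
    with vanish show "dotp u (B *v y) + dotp x (A *v y) = c"
      by simp
  qed
qed

lemma additivity_iff_shifted:
  assumes "A *v v = v"
  shows "dotp x (A *v y) = dotp u y + dotp x v
     \<longleftrightarrow> dotp u ((A - mat 1) *v (y - v)) + dotp (x - u) (A *v (y - v)) = dotp u v"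
    (is "?lhs = ?rhs \<longleftrightarrow> ?shifted = _")
proof -
  have shifted: "?shifted - dotp u v = ?lhs - ?rhs"
    unfolding matrix_vector_mult_diff_rdistrib matrix_vector_mult_diff_distrib assms
      matrix_vector_mul_lid dotp_diff_left dotp_diff_right
    by algebra
  have "?lhs = ?rhs \<longleftrightarrow> ?lhs - ?rhs = 0"
    by (rule eq_iff_diff_eq_0)
  also have "\<dots> \<longleftrightarrow> ?shifted - dotp u v = 0"
    by (simp only: shifted)
  also have "\<dots> \<longleftrightarrow> ?shifted = dotp u v"
    by (rule eq_iff_diff_eq_0[symmetric])
  finally show ?thesis .
qed

lemma digit_product_additivity_iff_shifted:
  assumes "A *v v = v"
  shows "dotp u ((P ** A) *v y) = dotp u y + dotp u (P *v v)
     \<longleftrightarrow> dotp u ((A - mat 1) *v (y - v)) + dotp (u v* P - u) (A *v (y - v)) = dotp u v"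
proof -
  have "dotp u ((P ** A) *v y) = dotp (u v* P) (A *v y)" "dotp u (P *v v) = dotp (u v* P) v"
    by (simp_all add: dotp_matrix_vector_mult vector_matrix_mul_assoc)
  then show ?thesis
    using additivity_iff_shifted[OF assms, of "u v* P" y u] by simp
qed

lemma mem_translation_iff: "a \<in> (+) u ` W \<longleftrightarrow> a - u \<in> (W :: 'a::ab_group_add set)"
  by (force simp: image_iff algebra_simps)

lemma space_U_eq_span: "space_U q u M = vec.span ((\<lambda>P. u v* P - u) ` digit_products q M)"
  unfolding space_U_def vec.span_def hull_def
  by (simp add: mem_translation_iff image_subset_iff)

lemma space_V_eq_span: "space_V q M v = vec.span ((\<lambda>Q. Q *v v - v) ` digit_products q M)"
  unfolding space_V_def vec.span_def hull_def
  by (simp add: mem_translation_iff image_subset_iff)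

theorem theorem9:
  fixes q r :: nat
    and f :: "nat \<Rightarrow> 'a::field"
    and u v :: "'a ^ 'n"
    and M :: "nat \<Rightarrow> 'a ^ 'n ^ 'n"
  assumes q: "q \<ge> 2"
    and rep: "\<forall>n. f n = dotp u (word_prod M (digits q n) *v v)"
    and zero_ins: "M 0 *v v = v"
  shows "quasiadditive q r f \<longleftrightarrow>
    (dotp u v = 0
     \<and> (\<forall>x\<in>space_U q u M. dotp x ((matpow (M 0) r - mat 1) *v v) = 0)
     \<and> (\<forall>y\<in>space_V q M v. dotp u ((matpow (M 0) r - mat 1) *v y) = 0)
     \<and> (\<forall>x\<in>space_U q u M. \<forall>y\<in>space_V q M v. dotp x (matpow (M 0) r *v y) = 0))"
proof -
  define A where "A = matpow (M 0) r"
  define D where "D = digit_products q M"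
  have Av: "A *v v = v"
    unfolding A_def using zero_ins by (rule matpow_fixed_vector)
  have "mat 1 \<in> D"
    using word_prod_in_digit_products[of "[]" q M] by (simp add: D_def)
  then have X0: "0 \<in> (\<lambda>P. u v* P - u) ` D" and Y0: "0 \<in> (\<lambda>Q. Q *v v - v) ` D"
    by (force simp: vector_matrix_mul_rid)+
  have "quasiadditive q r f \<longleftrightarrow> (\<forall>P\<in>D. \<forall>Q\<in>D.
      dotp u ((P ** A) *v (Q *v v)) = dotp u (Q *v v) + dotp u (P *v v))"
    unfolding A_def D_def by (rule quasiadditive_iff_digit_products[OF q rep[rule_format] zero_ins])
  also have "\<dots> \<longleftrightarrow> (\<forall>x\<in>(\<lambda>P. u v* P - u) ` D. \<forall>y\<in>(\<lambda>Q. Q *v v - v) ` D.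
      dotp u ((A - mat 1) *v y) + dotp x (A *v y) = dotp u v)"
    by (simp add: digit_product_additivity_iff_shifted[OF Av])
  also have "\<dots> \<longleftrightarrow> dotp u v = 0
      \<and> (\<forall>y\<in>space_V q M v. dotp u ((A - mat 1) *v y) = 0)
      \<and> (\<forall>x\<in>space_U q u M. \<forall>y\<in>space_V q M v. dotp x (A *v y) = 0)"
    unfolding space_U_eq_span space_V_eq_span D_def[symmetric]
    using X0 Y0 by (rule affine_bilinear_eq_iff_spans)
  also have "\<dots> \<longleftrightarrow> dotp u v = 0
      \<and> (\<forall>x\<in>space_U q u M. dotp x ((A - mat 1) *v v) = 0)
      \<and> (\<forall>y\<in>space_V q M v. dotp u ((A - mat 1) *v y) = 0)
      \<and> (\<forall>x\<in>space_U q u M. \<forall>y\<in>space_V q M v. dotp x (A *v y) = 0)"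
    \<comment> \<open>the second condition is vacuous: zero-insensitivity gives (M_0^r - I) v = 0\<close>
    using Av by (simp add: matrix_vector_mult_diff_rdistrib)
  finally show ?thesis
    unfolding A_def .
qed

end
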